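(* Let $(X,\mathcal{A})$ be a measurable space, $f,g\in\mathcal{F}_{[0,1]}^{(X,\mathcal{A})}$ comonotone, and $\star:[0,1]^2\to[0,1]$ continuous and non-decreasing in both arguments. Let $\circledast$ be a semicopula and $\alpha,\beta,\gamma,\lambda,\upsilon,\tau\in(0,\infty)$ with $\gamma\tau\ge1$ and $\beta\upsilon\ge1$. If for all $a,b,c\in[0,1]$ \[ \big[(a\star b)^{\alpha}\circledast c\big]^{\lambda}\ \ge\ \big[(a^{\beta}\circledast c)^{\upsilon}\star b\big]\vee\big[a\star(b^{\gamma}\circledast c)^{\tau}\big], \] then for every monotone measure $m$ on $(X,\mathcal{A})$ with $m(X)=1$, \[ \big[\mathbf{I}_\circledast(m,(f\star g)^{\alpha})\big]^{\lambda}\ \ge\ \big[\mathbf{I}_\circledast(m,f^{\beta})\big]^{\upsilon}\star\big[\mathbf{I}_\circledast(m,g^{\gamma})\big]^{\tau}. \]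
   Context: A monotone measure on $(X,\mathcal{A})$ is $m:\mathcal{A}\to[0,\infty]$ with $m(\emptyset)=0$, $m(X)>0$, $m(A)\le m(B)$ for $A\subseteq B$. $\mathcal{F}_{[0,1]}^{(X,\mathcal{A})}$ is the set of $\mathcal{A}$-measurable $f:X\to[0,1]$. A semicopula is a map $\circledast:[0,1]^2\to[0,1]$, non-decreasing in both components, with neutral element $1$ and $a\circledast b\le\min(a,b)$. The seminormed integral is $\mathbf{I}_\circledast(m,f)=\sup\{t\circledast m(\{f\ge t\}) : t\in[0,1]\}$. $f,g$ are comonotone if $(f(x)-f(y))(g(x)-g(y))\ge0$ for all $x,y$. Operations on functions are pointwise. *)

theory Defs
  imports "HOL-Analysis.Analysis"
begin

definition monotone_measure :: "'a measure \<Rightarrow> ('a set \<Rightarrow> ennreal) \<Rightarrow> bool" where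
  "monotone_measure M m \<longleftrightarrow>
     m {} = 0 \<and> m (space M) > 0 \<and>
     (\<forall>A\<in>sets M. \<forall>B\<in>sets M. A \<subseteq> B \<longrightarrow> m A \<le> m B)"

definition F01 :: "'a measure \<Rightarrow> ('a \<Rightarrow> real) set" where
  "F01 M = {f. f \<in> borel_measurable M \<and> (\<forall>x\<in>space M. 0 \<le> f x \<and> f x \<le> 1)}"

definition semicopula :: "(real \<Rightarrow> real \<Rightarrow> real) \<Rightarrow> bool" where
  "semicopula S \<longleftrightarrow>
     (\<forall>a\<in>{0..1}. \<forall>b\<in>{0..1}. S a b \<in> {0..1}) \<and>
     (\<forall>a\<in>{0..1}. \<forall>a'\<in>{0..1}. \<forall>b\<in>{0..1}. \<forall>b'\<in>{0..1}.
        a \<le> a' \<longrightarrow> b \<le> b' \<longrightarrow> S a b \<le> S a' b') \<and>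
     (\<forall>a\<in>{0..1}. S a 1 = a \<and> S 1 a = a) \<and>
     (\<forall>a\<in>{0..1}. \<forall>b\<in>{0..1}. S a b \<le> min a b)"

text \<open>Seminormed integral; the measure value is converted to a real number
  (all values are finite in the situation considered, where m(X) = 1).\<close>
definition seminormed_integral ::
  "(real \<Rightarrow> real \<Rightarrow> real) \<Rightarrow> 'a measure \<Rightarrow> ('a set \<Rightarrow> ennreal) \<Rightarrow> ('a \<Rightarrow> real) \<Rightarrow> real" where
  "seminormed_integral S M m f =
     (SUP t\<in>{0..1}. S t (enn2real (m {x\<in>space M. f x \<ge> t})))"

definition comonotone :: "'a measure \<Rightarrow> ('a \<Rightarrow> real) \<Rightarrow> ('a \<Rightarrow> real) \<Rightarrow> bool" where
  "comonotone M f g \<longleftrightarrow>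
     (\<forall>x\<in>space M. \<forall>y\<in>space M. (f x - f y) * (g x - g y) \<ge> 0)"

end

theory Submission
  imports Defs
begin

(* For levels a, b \<in> [0,1] the level sets {f \<ge> a} and {g \<ge> b} are nested by comonotonicity, so
   their intersection, of measure c, is one of them and lies in {(f \<star> g)\<^sup>\<alpha> \<ge> (a \<star> b)\<^sup>\<alpha>}.
   Hence [(a \<star> b)\<^sup>\<alpha> \<circledast> c]\<^sup>\<lambda> is below the left-hand side, and by the hypothesis it dominates
   (a\<^sup>\<beta> \<circledast> m{f \<ge> a})\<^sup>\<upsilon> \<star> (b\<^sup>\<gamma> \<circledast> m{g \<ge> b})\<^sup>\<tau>, once the factor of the larger level set
   is bounded by a resp. b using \<beta>\<upsilon> \<ge> 1 resp. \<gamma>\<tau> \<ge> 1.  Substituting s = a\<^sup>\<beta> and t = b\<^sup>\<gamma> in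
   the integrals on the right, it is \<star> applied to suprema of these factors, and the bound passes
   to the suprema because \<star> is continuous. *)

lemma powr_le_self_unit:
  fixes x e :: real
  assumes "0 \<le> x" "x \<le> 1" "1 \<le> e"
  shows "x powr e \<le> x"
  using powr_mono'[of 1 e x] assms by (cases "x = 0") auto

lemma powr_unit_interval:
  fixes x e :: real
  assumes "x \<in> {0..1}" "0 < e"
  shows "x powr e \<in> {0..1}"
  using assms by (simp add: powr_le1)

lemma powr_le_powr_iff:
  fixes x y a :: real
  assumes "0 \<le> x" "0 \<le> y" "0 < a"
  shows "x powr a \<le> y powr a \<longleftrightarrow> x \<le> y"
  using assms powr_mono2[of a x y] powr_less_mono2[of a y x] by (auto simp: not_le[symmetric])

lemma powr_image_unit_interval:
  fixes e :: real
  assumes "0 < e"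
  shows "(\<lambda>a. a powr e) ` {0..1} = {0..1}"
proof
  show "(\<lambda>a. a powr e) ` {0..1} \<subseteq> {0..1}"
    using powr_unit_interval assms by auto
  show "{0..1} \<subseteq> (\<lambda>a. a powr e) ` {0..1}"
  proof
    fix s :: real assume s: "s \<in> {0..1}"
    then have "s = (s powr (1/e)) powr e" using assms by (simp add: powr_powr)
    moreover have "s powr (1/e) \<in> {0..1}" using s assms by (intro powr_unit_interval) auto
    ultimately show "s \<in> (\<lambda>a. a powr e) ` {0..1}" by blast
  qed
qed

lemma semicopulaD:
  assumes "semicopula S"
  shows semicopula_unit_interval: "\<And>a b. a \<in> {0..1} \<Longrightarrow> b \<in> {0..1} \<Longrightarrow> S a b \<in> {0..1}"
    and semicopula_mono: "\<And>a a' b b'. a \<in> {0..1} \<Longrightarrow> a' \<in> {0..1} \<Longrightarrow> b \<in> {0..1} \<Longrightarrow>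
      b' \<in> {0..1} \<Longrightarrow> a \<le> a' \<Longrightarrow> b \<le> b' \<Longrightarrow> S a b \<le> S a' b'"
    and semicopula_le_left: "\<And>a b. a \<in> {0..1} \<Longrightarrow> b \<in> {0..1} \<Longrightarrow> S a b \<le> a"
  using assms unfolding semicopula_def by (blast, blast, fastforce)

lemma semicopula_powr_powr_le:
  fixes b c e k :: real
  assumes "semicopula S" "b \<in> {0..1}" "c \<in> {0..1}" "0 < e" "0 < k" "1 \<le> e * k"
  shows "(S (b powr e) c) powr k \<le> b"
proof -
  have "b powr e \<in> {0..1}" using assms by (intro powr_unit_interval)
  then have "S (b powr e) c \<in> {0..1}" "S (b powr e) c \<le> b powr e"
    using assms semicopula_unit_interval semicopula_le_left by auto
  then have "(S (b powr e) c) powr k \<le> (b powr e) powr k"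
    using assms by (intro powr_mono2) auto
  also have "\<dots> = b powr (e * k)" by (simp add: powr_powr)
  also have "\<dots> \<le> b" using assms by (intro powr_le_self_unit) auto
  finally show ?thesis .
qed

lemma star_semicopula_bound:
  fixes star S :: "real \<Rightarrow> real \<Rightarrow> real" and \<alpha> \<beta> \<gamma> lam \<upsilon> \<tau> a b c d :: real
  assumes star_mono: "\<forall>a\<in>{0..1}. \<forall>a'\<in>{0..1}. \<forall>b\<in>{0..1}. \<forall>b'\<in>{0..1}.
                      a \<le> a' \<longrightarrow> b \<le> b' \<longrightarrow> star a b \<le> star a' b'"
    and S: "semicopula S"
    and pos: "\<beta> > 0" "\<gamma> > 0" "\<upsilon> > 0" "\<tau> > 0"
    and gt: "\<gamma> * \<tau> \<ge> 1" and bu: "\<beta> * \<upsilon> \<ge> 1"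
    and cond: "\<forall>a\<in>{0..1}. \<forall>b\<in>{0..1}. \<forall>c\<in>{0..1}.
       (S ((star a b) powr \<alpha>) c) powr lam \<ge>
       max (star ((S (a powr \<beta>) c) powr \<upsilon>) b) (star a ((S (b powr \<gamma>) c) powr \<tau>))"
    and abcd: "a \<in> {0..1}" "b \<in> {0..1}" "c \<in> {0..1}" "d \<in> {0..1}"
  shows "star ((S (a powr \<beta>) c) powr \<upsilon>) ((S (b powr \<gamma>) d) powr \<tau>) \<le> (S ((star a b) powr \<alpha>) c) powr lam"
    and "star ((S (a powr \<beta>) d) powr \<upsilon>) ((S (b powr \<gamma>) c) powr \<tau>) \<le> (S ((star a b) powr \<alpha>) c) powr lam"
proof -
  define p where "p w = (S (a powr \<beta>) w) powr \<upsilon>" for w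
  define q where "q w = (S (b powr \<gamma>) w) powr \<tau>" for w
  have mono: "star x y \<le> star x' y'"
    if "x \<in> {0..1}" "x' \<in> {0..1}" "y \<in> {0..1}" "y' \<in> {0..1}" "x \<le> x'" "y \<le> y'" for x x' y y'
    using star_mono that by blast
  have pq: "p w \<in> {0..1}" "q w \<in> {0..1}" "p w \<le> a" "q w \<le> b" if w: "w \<in> {0..1}" for w
  proof -
    show "p w \<in> {0..1}" "q w \<in> {0..1}"
      unfolding p_def q_def using abcd pos w
      by (auto intro!: powr_unit_interval semicopula_unit_interval[OF S] simp del: atLeastAtMost_iff)
    show "p w \<le> a" "q w \<le> b"
      unfolding p_def q_def using abcd pos semicopula_powr_powr_le[OF S _ w] gt bu by auto
  qed
  have bound: "max (star (p c) b) (star a (q c)) \<le> (S ((star a b) powr \<alpha>) c) powr lam"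
    unfolding p_def q_def using cond abcd(1-3) by blast
  have "star (p c) (q d) \<le> star (p c) b" using abcd pq by (intro mono) auto
  also have "\<dots> \<le> (S ((star a b) powr \<alpha>) c) powr lam" using bound by simp
  finally show "star (p c) (q d) \<le> (S ((star a b) powr \<alpha>) c) powr lam" .
  have "star (p d) (q c) \<le> star a (q c)" using abcd pq by (intro mono) auto
  also have "\<dots> \<le> (S ((star a b) powr \<alpha>) c) powr lam" using bound by simp
  finally show "star (p d) (q c) \<le> (S ((star a b) powr \<alpha>) c) powr lam" .
qed

lemma monotone_measure_unit_interval:
  assumes "monotone_measure M m" "m (space M) = 1" "E \<in> sets M"
  shows "enn2real (m E) \<in> {0..1}"
proof -
  have "m E \<le> 1"
    using assms sets.sets_into_space sets.top unfolding monotone_measure_def by metis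
  then show ?thesis using enn2real_mono[of "m E" 1] by simp
qed

lemma monotone_measure_enn2real_mono:
  assumes "monotone_measure M m" "m (space M) = 1" "E \<in> sets M" "E' \<in> sets M" "E \<subseteq> E'"
  shows "enn2real (m E) \<le> enn2real (m E')"
proof (rule enn2real_mono)
  show "m E \<le> m E'" using assms unfolding monotone_measure_def by blast
  have "m E' \<le> 1"
    using assms sets.sets_into_space sets.top unfolding monotone_measure_def by metis
  then show "m E' < top" using ennreal_one_less_top by (rule order.strict_trans1)
qed

lemma seminormed_integral_ge:
  assumes S: "semicopula S" and m: "monotone_measure M m" "m (space M) = 1"
    and h: "h \<in> borel_measurable M" and t: "t \<in> {0..1}"
    and E: "E \<in> sets M" "E \<subseteq> {x\<in>space M. t \<le> h x}"
  shows "S t (enn2real (m E)) \<le> seminormed_integral S M m h"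
proof -
  have level: "{x\<in>space M. u \<le> h x} \<in> sets M" for u using h by measurable
  have "S t (enn2real (m E)) \<le> S t (enn2real (m {x\<in>space M. t \<le> h x}))"
    using m E level[of t]
    by (intro semicopula_mono[OF S t t] order.refl monotone_measure_unit_interval
        monotone_measure_enn2real_mono)
  also have "\<dots> \<le> seminormed_integral S M m h"
    unfolding seminormed_integral_def
  proof (rule cSUP_upper[OF t])
    show "bdd_above ((\<lambda>u. S u (enn2real (m {x\<in>space M. u \<le> h x}))) ` {0..1})"
      using semicopula_unit_interval[OF S] monotone_measure_unit_interval[OF m level]
      by (intro bdd_aboveI[of _ 1]) auto
  qed
  finally show ?thesis .
qed

lemma seminormed_integral_powr:
  fixes e :: real
  assumes "0 < e" "\<forall>x\<in>space M. 0 \<le> f x"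
  shows "seminormed_integral S M m (\<lambda>x. f x powr e) =
    (SUP a\<in>{0..1}. S (a powr e) (enn2real (m {x\<in>space M. a \<le> f x})))"
proof -
  have "seminormed_integral S M m (\<lambda>x. f x powr e) =
      (SUP s\<in>(\<lambda>a. a powr e) ` {0..1}. S s (enn2real (m {x\<in>space M. s \<le> f x powr e})))"
    by (simp only: seminormed_integral_def powr_image_unit_interval[OF assms(1)])
  also have "\<dots> = (SUP a\<in>{0..1}. S (a powr e) (enn2real (m {x\<in>space M. a powr e \<le> f x powr e})))"
    by (simp add: image_image)
  also have "\<dots> = (SUP a\<in>{0..1}. S (a powr e) (enn2real (m {x\<in>space M. a \<le> f x})))"
  proof (intro SUP_cong refl)
    fix a :: real assume "a \<in> {0..1}"
    then have "{x\<in>space M. a powr e \<le> f x powr e} = {x\<in>space M. a \<le> f x}"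
      using assms powr_le_powr_iff by auto
    then show "S (a powr e) (enn2real (m {x\<in>space M. a powr e \<le> f x powr e})) =
        S (a powr e) (enn2real (m {x\<in>space M. a \<le> f x}))" by simp
  qed
  finally show ?thesis .
qed

lemma comonotone_level_sets_nested:
  assumes "comonotone M f g"
  shows "{x\<in>space M. a \<le> f x} \<subseteq> {x\<in>space M. b \<le> g x} \<or> {x\<in>space M. b \<le> g x} \<subseteq> {x\<in>space M. a \<le> f x}"
proof (rule ccontr)
  assume "\<not> ?thesis"
  then obtain x y where x: "x \<in> space M" "a \<le> f x" "g x < b"
    and y: "y \<in> space M" "b \<le> g y" "f y < a"
    unfolding subset_iff not_le[symmetric] by blast
  then have "(f x - f y) * (g x - g y) < 0" by (intro mult_pos_neg) auto
  moreover have "0 \<le> (f x - f y) * (g x - g y)"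
    using assms x y unfolding comonotone_def by blast
  ultimately show False by simp
qed

lemma borel_measurable_continuous_on_Pair:
  fixes F :: "'b::second_countable_topology \<Rightarrow> 'c::second_countable_topology \<Rightarrow> 'd::topological_space"
  assumes F: "continuous_on (A \<times> B) (\<lambda>(a, b). F a b)"
    and f: "f \<in> borel_measurable M" and g: "g \<in> borel_measurable M"
    and fg: "\<forall>x\<in>space M. f x \<in> A \<and> g x \<in> B"
  shows "(\<lambda>x. F (f x) (g x)) \<in> borel_measurable M"
proof -
  have "(\<lambda>x. (f x, g x)) \<in> M \<rightarrow>\<^sub>M restrict_space borel (A \<times> B)"
    using f g fg by (intro measurable_restrict_space2) auto
  from measurable_comp[OF this borel_measurable_continuous_on_restrict[OF F]]
  show ?thesis by (simp add: comp_def)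
qed

lemma continuous_on_Sup_le:
  fixes H :: "real \<times> real \<Rightarrow> real"
  assumes H: "continuous_on K H" "closed K"
    and AB: "A \<noteq> {}" "B \<noteq> {}" "bdd_above A" "bdd_above B" "A \<times> B \<subseteq> K"
    and le: "\<And>a b. a \<in> A \<Longrightarrow> b \<in> B \<Longrightarrow> H (a, b) \<le> L"
  shows "H (Sup A, Sup B) \<le> L"
proof -
  have closed: "closed {p\<in>K. H p \<le> L}"
    using H by (intro continuous_on_closed_Collect_le continuous_on_const)
  have "(Sup A, Sup B) \<in> closure (A \<times> B)"
    using AB closure_contains_Sup by (simp add: closure_Times)
  also have "\<dots> \<subseteq> {p\<in>K. H p \<le> L}"
    using AB le by (intro closure_minimal[OF _ closed]) auto
  finally show ?thesis by simp
qed

lemma semicopula_level_weight_unit_interval: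
  fixes e :: real
  assumes "semicopula S" "monotone_measure M m" "m (space M) = 1"
    and "f \<in> borel_measurable M" "a \<in> {0..1}" "0 < e"
  shows "S (a powr e) (enn2real (m {x\<in>space M. a \<le> f x})) \<in> {0..1}"
proof -
  have "{x\<in>space M. a \<le> f x} \<in> sets M" using assms(4) by measurable
  then show ?thesis
    using assms by (intro semicopula_unit_interval[OF assms(1)] powr_unit_interval
        monotone_measure_unit_interval[OF assms(2,3)])
qed

lemma continuous_on_powr_pair:
  fixes star :: "real \<Rightarrow> real \<Rightarrow> real" and u v :: real
  assumes "continuous_on ({0..1} \<times> {0..1}) (\<lambda>(a, b). star a b)" "0 < u" "0 < v"
  shows "continuous_on ({0..1} \<times> {0..1}) (\<lambda>p. star (fst p powr u) (snd p powr v))"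
proof -
  have "continuous_on ({0..1} \<times> {0..1}) (\<lambda>p. (\<lambda>(a, b). star a b) (fst p powr u, snd p powr v))"
    by (rule continuous_on_compose2[OF assms(1)])
      (use assms powr_unit_interval in \<open>auto intro!: continuous_intros continuous_on_powr'\<close>)
  then show ?thesis by simp
qed

lemma star_level_weights_le_integral:
  fixes M :: "'a measure" and f g :: "'a \<Rightarrow> real"
    and star S :: "real \<Rightarrow> real \<Rightarrow> real"
    and \<alpha> \<beta> \<gamma> lam \<upsilon> \<tau> a b :: real
  assumes fg: "f \<in> F01 M" "g \<in> F01 M" "comonotone M f g"
    and star_measurable: "(\<lambda>x. star (f x) (g x)) \<in> borel_measurable M"
    and star_range: "\<forall>a\<in>{0..1}. \<forall>b\<in>{0..1}. star a b \<in> {0..1}"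
    and star_mono: "\<forall>a\<in>{0..1}. \<forall>a'\<in>{0..1}. \<forall>b\<in>{0..1}. \<forall>b'\<in>{0..1}.
                      a \<le> a' \<longrightarrow> b \<le> b' \<longrightarrow> star a b \<le> star a' b'"
    and S: "semicopula S"
    and pos: "\<alpha> > 0" "\<beta> > 0" "\<gamma> > 0" "lam > 0" "\<upsilon> > 0" "\<tau> > 0"
    and gt: "\<gamma> * \<tau> \<ge> 1" and bu: "\<beta> * \<upsilon> \<ge> 1"
    and cond: "\<forall>a\<in>{0..1}. \<forall>b\<in>{0..1}. \<forall>c\<in>{0..1}.
       (S ((star a b) powr \<alpha>) c) powr lam \<ge>
       max (star ((S (a powr \<beta>) c) powr \<upsilon>) b) (star a ((S (b powr \<gamma>) c) powr \<tau>))"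
    and m: "monotone_measure M m" "m (space M) = 1"
    and ab: "a \<in> {0..1}" "b \<in> {0..1}"
  shows "star ((S (a powr \<beta>) (enn2real (m {x\<in>space M. a \<le> f x}))) powr \<upsilon>)
              ((S (b powr \<gamma>) (enn2real (m {x\<in>space M. b \<le> g x}))) powr \<tau>)
    \<le> (seminormed_integral S M m (\<lambda>x. (star (f x) (g x)) powr \<alpha>)) powr lam"
proof -
  have f: "f \<in> borel_measurable M" "\<forall>x\<in>space M. f x \<in> {0..1}"
    and g: "g \<in> borel_measurable M" "\<forall>x\<in>space M. g x \<in> {0..1}"
    using fg unfolding F01_def by auto
  define E1 where "E1 = {x\<in>space M. a \<le> f x}"
  define E2 where "E2 = {x\<in>space M. b \<le> g x}"
  define c where "c = enn2real (m (E1 \<inter> E2))"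
  define r where "r = (star a b) powr \<alpha>"
  have E: "E1 \<in> sets M" "E2 \<in> sets M"
    unfolding E1_def E2_def using f g by measurable
  have c: "c \<in> {0..1}"
    unfolding c_def using E by (intro monotone_measure_unit_interval[OF m]) auto
  have r: "r \<in> {0..1}"
    unfolding r_def using star_range ab pos by (intro powr_unit_interval) auto
  have "E1 \<inter> E2 \<subseteq> {x\<in>space M. r \<le> star (f x) (g x) powr \<alpha>}"
  proof
    fix x assume "x \<in> E1 \<inter> E2"
    then have x: "x \<in> space M" "a \<le> f x" "b \<le> g x" unfolding E1_def E2_def by auto
    then have "star a b \<le> star (f x) (g x)" using star_mono ab f g by simp
    then show "x \<in> {x\<in>space M. r \<le> star (f x) (g x) powr \<alpha>}"
      unfolding r_def using x star_range ab pos by (auto intro: powr_mono2)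
  qed
  then have "S r c \<le> seminormed_integral S M m (\<lambda>x. star (f x) (g x) powr \<alpha>)"
    unfolding c_def using E star_measurable
    by (intro seminormed_integral_ge[OF S m _ r]) auto
  then have bound: "(S r c) powr lam \<le> (seminormed_integral S M m (\<lambda>x. star (f x) (g x) powr \<alpha>)) powr lam"
    using semicopula_unit_interval[OF S r c] pos by (intro powr_mono2) auto
  have E12: "enn2real (m E1) \<in> {0..1}" "enn2real (m E2) \<in> {0..1}"
    using E monotone_measure_unit_interval[OF m] by auto
  note star_bound = star_semicopula_bound[OF star_mono S pos(2,3,5,6) gt bu cond ab]
  from comonotone_level_sets_nested[OF fg(3), of a b]
  consider "E1 \<subseteq> E2" | "E2 \<subseteq> E1" unfolding E1_def E2_def by blast
  then show ?thesis
  proof cases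
    case 1
    then have "c = enn2real (m E1)" unfolding c_def by (simp add: Int_absorb2)
    then show ?thesis using star_bound(1)[OF E12] bound unfolding E1_def E2_def r_def by simp
  next
    case 2
    then have "c = enn2real (m E2)" unfolding c_def by (simp add: Int_absorb1)
    then show ?thesis using star_bound(2)[OF E12(2,1)] bound unfolding E1_def E2_def r_def by simp
  qed
qed

theorem corollary3p13:
  fixes M :: "'a measure" and f g :: "'a \<Rightarrow> real"
    and star S :: "real \<Rightarrow> real \<Rightarrow> real"
    and \<alpha> \<beta> \<gamma> lam \<upsilon> \<tau> :: real
  assumes fg: "f \<in> F01 M" "g \<in> F01 M" "comonotone M f g"
    and star_range: "\<forall>a\<in>{0..1}. \<forall>b\<in>{0..1}. star a b \<in> {0..1}"
    and star_cont: "continuous_on ({0..1} \<times> {0..1}) (\<lambda>(a, b). star a b)"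
    and star_mono: "\<forall>a\<in>{0..1}. \<forall>a'\<in>{0..1}. \<forall>b\<in>{0..1}. \<forall>b'\<in>{0..1}.
                      a \<le> a' \<longrightarrow> b \<le> b' \<longrightarrow> star a b \<le> star a' b'"
    and S: "semicopula S"
    and pos: "\<alpha> > 0" "\<beta> > 0" "\<gamma> > 0" "lam > 0" "\<upsilon> > 0" "\<tau> > 0"
    and gt: "\<gamma> * \<tau> \<ge> 1" and bu: "\<beta> * \<upsilon> \<ge> 1"
    and cond: "\<forall>a\<in>{0..1}. \<forall>b\<in>{0..1}. \<forall>c\<in>{0..1}.
       (S ((star a b) powr \<alpha>) c) powr lam \<ge>
       max (star ((S (a powr \<beta>) c) powr \<upsilon>) b) (star a ((S (b powr \<gamma>) c) powr \<tau>))"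
  shows "\<forall>m. monotone_measure M m \<and> m (space M) = 1 \<longrightarrow>
     (seminormed_integral S M m (\<lambda>x. (star (f x) (g x)) powr \<alpha>)) powr lam \<ge>
     star ((seminormed_integral S M m (\<lambda>x. f x powr \<beta>)) powr \<upsilon>)
          ((seminormed_integral S M m (\<lambda>x. g x powr \<gamma>)) powr \<tau>)"
proof (intro allI impI, elim conjE)
  fix m assume m: "monotone_measure M m" "m (space M) = 1"
  have f: "f \<in> borel_measurable M" "\<forall>x\<in>space M. f x \<in> {0..1}"
    and g: "g \<in> borel_measurable M" "\<forall>x\<in>space M. g x \<in> {0..1}"
    using fg unfolding F01_def by auto
  define \<phi> where "\<phi> a = S (a powr \<beta>) (enn2real (m {x\<in>space M. a \<le> f x}))" for a
  define \<psi> where "\<psi> b = S (b powr \<gamma>) (enn2real (m {x\<in>space M. b \<le> g x}))" for b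
  define H where "H p = star (fst p powr \<upsilon>) (snd p powr \<tau>)" for p
  define L where "L = seminormed_integral S M m (\<lambda>x. (star (f x) (g x)) powr \<alpha>) powr lam"
  have range: "\<phi> a \<in> {0..1}" "\<psi> a \<in> {0..1}" if "a \<in> {0..1}" for a
    unfolding \<phi>_def \<psi>_def using f g pos that
    by (intro semicopula_level_weight_unit_interval[OF S m]; simp)+
  have "continuous_on ({0..1} \<times> {0..1}) H"
    unfolding H_def by (rule continuous_on_powr_pair[OF star_cont pos(5,6)])
  moreover have "H (a', b') \<le> L"
    if "a' \<in> \<phi> ` {0..1}" "b' \<in> \<psi> ` {0..1}" for a' b'
    using that borel_measurable_continuous_on_Pair[OF star_cont f(1) g(1)] f g
      star_level_weights_le_integral[OF fg _ star_range star_mono S pos gt bu cond m]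
    unfolding H_def L_def \<phi>_def \<psi>_def by (auto simp del: atLeastAtMost_iff)
  ultimately have "H (Sup (\<phi> ` {0..1}), Sup (\<psi> ` {0..1})) \<le> L"
    using range by (intro continuous_on_Sup_le[of _ H]) (auto intro!: bdd_aboveI[of _ 1] closed_Times)
  then show "star (seminormed_integral S M m (\<lambda>x. f x powr \<beta>) powr \<upsilon>)
      (seminormed_integral S M m (\<lambda>x. g x powr \<gamma>) powr \<tau>)
    \<le> seminormed_integral S M m (\<lambda>x. star (f x) (g x) powr \<alpha>) powr lam"
    unfolding H_def L_def \<phi>_def \<psi>_def
    using seminormed_integral_powr[of \<beta> M f S m] seminormed_integral_powr[of \<gamma> M g S m] pos f g by simp
qed

end
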